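(* Let $p>1$ and $\lambda>0$ be fixed, and let $\phi:(0,+\infty)\times[0,\pi/2]\to[0,+\infty)$ be defined by $$\phi(R,\theta)=2\int_0^1\frac{ds}{\sqrt{\frac{1}{\cos^2\theta}-s^2+\frac{2R^{p-1}\cos^{p-1}\theta}{\lambda(p+1)}\,(1-s^{p+1})}}\quad\text{for }\theta\in[0,\pi/2),\qquad \phi(R,\pi/2)=0.$$ Given $a,b$ with $0<a<b<\pi/2$, there exists $R^*=R^*(a,b)$ such that, for every $R>R^*$: (a) the function $\phi(R,\cdot)$ is increasing in $[a,b]$; (b) there is $\theta^*\in(b,\pi/2)$ at which $\phi(R,\cdot)$ attains its absolute maximum on $[0,\pi/2]$; (c) there exists $\theta_*\in[0,a]$ such that $\phi(R,\theta_* )=\min_{\theta\in[0,a]}\phi(R,\theta)>0=\phi(R,\pi/2)$. *)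

theory Defs
  imports "HOL-Analysis.Analysis"
begin

text \<open>The integral is the Henstock-Kurzweil integral over [0,1] (the integrand is
  nonnegative, so this agrees with the (improper) Lebesgue integral).\<close>
definition phi :: "real \<Rightarrow> real \<Rightarrow> real \<Rightarrow> real \<Rightarrow> real" where
  "phi p lam R \<theta> =
     (if \<theta> = pi / 2 then 0
      else 2 * integral {0..1} (\<lambda>s. 1 / sqrt (1 / (cos \<theta>)\<^sup>2 - s\<^sup>2
              + 2 * R powr (p - 1) * (cos \<theta>) powr (p - 1) / (lam * (p + 1))
                * (1 - s powr (p + 1)))))"

end

theory Submission
  imports Defs
begin

(*
  With K = 2 R^(p-1) / (lam (p+1)) the function phi(R, .) is the time map
  T_K(theta) = 2 int_0^1 A_K(theta,s)^(-1/2) ds, where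
  A_K(theta,s) = sec^2 theta - s^2 + K cos^(p-1) theta (1 - s^(p+1)), and R -> oo means K -> oo.
  Since A_K >= 1 - s, dominated convergence makes T_K continuous on [0, pi/2); the bound
  T_K(theta) <= 4 cos theta near pi/2 extends continuity to [0, pi/2], where T_K(pi/2) = 0.

  Monotonicity: for theta1 < theta2, A_K(theta1,s) - A_K(theta2,s) = K D (1 - s^(p+1)) - E with
  D = cos^(p-1) theta1 - cos^(p-1) theta2 > 0 and 0 <= E = sec^2 theta2 - sec^2 theta1 <= M D by the
  Cauchy mean value theorem. So the integrand of T_K(theta2) beats that of T_K(theta1) by order
  D / sqrt K on [0, 1/2], and can lose only on [1 - M/K, 1], by O(E); the gain wins for large K.

  Maximum: T_K <= 4 / sqrt (K cos^(p-1) c) on [0, c], while T_K(t) >= 2 / sqrt (sec^2 t + K cos^(p-1) t).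
  Take c in (b, pi/2) and then t in (c, pi/2) with 8 cos^(p-1) t < cos^(p-1) c: for large K, T_K(t)
  exceeds every value on [0, c], so the maximum of T_K on [0, pi/2] lies in (c, pi/2).
*)

lemma filterlim_powr_at_top:
  fixes q :: real
  assumes "0 < q"
  shows "filterlim (\<lambda>x. x powr q) at_top at_top"
proof -
  have "filterlim (\<lambda>x. exp (q * ln x)) at_top at_top"
    by (intro filterlim_compose[OF exp_at_top]
        filterlim_tendsto_pos_mult_at_top[OF tendsto_const assms ln_at_top])
  moreover have "\<forall>\<^sub>F x in at_top. exp (q * ln x) = x powr q"
    using eventually_gt_at_top[of 0] by eventually_elim (simp add: powr_def)
  ultimately show ?thesis
    using filterlim_cong by fastforce
qed

lemma eventually_at_top_imp_pos_threshold:
  fixes P :: "real \<Rightarrow> bool"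
  assumes "eventually P at_top"
  shows "\<exists>N>0. \<forall>x>N. P x"
proof -
  obtain N where "\<forall>x>N. P x"
    using assms by (auto simp: eventually_at_top_dense)
  then show ?thesis
    by (intro exI[of _ "max N 1"]) auto
qed

lemma eventually_cube_sqrt_less_square:
  fixes C D :: real
  assumes "0 \<le> C" "0 \<le> D"
  shows "\<forall>\<^sub>F K in at_top. C * ((D + K) * sqrt (D + K)) < K\<^sup>2"
proof -
  have "\<forall>\<^sub>F K in at_top. max 1 D \<le> K \<and> 4 * C < sqrt K"
    using eventually_ge_at_top eventually_compose_filterlim[OF eventually_gt_at_top sqrt_at_top]
    by (rule eventually_conj)
  then show ?thesis
  proof eventually_elim
    case (elim K)
    then have K: "1 \<le> K" "D \<le> K"
      by auto
    have "sqrt (D + K) \<le> sqrt (4 * K)"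
      using K by simp
    then have "sqrt (D + K) \<le> 2 * sqrt K"
      by (simp add: real_sqrt_mult)
    then have "(D + K) * sqrt (D + K) \<le> (2 * K) * (2 * sqrt K)"
      using K assms by (intro mult_mono) auto
    then have "C * ((D + K) * sqrt (D + K)) \<le> (4 * C) * (K * sqrt K)"
      using assms by (simp add: mult_left_mono mult_ac)
    also have "\<dots> < sqrt K * (K * sqrt K)"
      using elim K by (intro mult_strict_right_mono) auto
    also have "\<dots> = K\<^sup>2"
      using K by (simp add: power2_eq_square mult_ac)
    finally show ?case .
  qed
qed

lemma inv_sqrt_antimono:
  fixes x y :: real
  assumes "0 < x" "x \<le> y"
  shows "1 / sqrt y \<le> 1 / sqrt x"
  using assms by (intro divide_left_mono) (auto intro: mult_pos_pos)

lemma inv_sqrt_diff_eq: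
  fixes X Y :: real
  assumes "0 < X" "0 < Y"
  shows "1 / sqrt X - 1 / sqrt Y = (Y - X) / (sqrt X * sqrt Y * (sqrt X + sqrt Y))"
proof -
  define x y where "x = sqrt X" and "y = sqrt Y"
  have xy: "0 < x" "0 < y" "X = x\<^sup>2" "Y = y\<^sup>2"
    using assms by (auto simp: x_def y_def)
  have "y\<^sup>2 - x\<^sup>2 = (y - x) * (x + y)"
    by (simp add: power2_eq_square algebra_simps)
  then have "(y\<^sup>2 - x\<^sup>2) / (x * y * (x + y)) = (y - x) / (x * y)"
    using xy by (simp add: mult_divide_mult_cancel_right)
  then have "1 / x - 1 / y = (y\<^sup>2 - x\<^sup>2) / (x * y * (x + y))"
    using xy by (simp add: field_simps)
  then show ?thesis
    using assms by (simp add: x_def y_def)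
qed

lemma inv_sqrt_diff_ge:
  fixes X Y B G :: real
  assumes "0 < X" "X \<le> Y" "Y \<le> B" "G \<le> Y - X"
  shows "G / (2 * B * sqrt B) \<le> 1 / sqrt X - 1 / sqrt Y"
proof -
  have sqrt_le: "sqrt X \<le> sqrt B" "sqrt Y \<le> sqrt B"
    using assms by simp_all
  have "sqrt X * sqrt Y \<le> sqrt B * sqrt B"
    using sqrt_le assms by (intro mult_mono) auto
  moreover have "sqrt X + sqrt Y \<le> 2 * sqrt B"
    using sqrt_le by linarith
  ultimately have "sqrt X * sqrt Y * (sqrt X + sqrt Y) \<le> sqrt B * sqrt B * (2 * sqrt B)"
    by (rule mult_mono) (use assms in auto)
  then have den: "sqrt X * sqrt Y * (sqrt X + sqrt Y) \<le> 2 * B * sqrt B"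
    using assms by (simp add: mult_ac)
  have "0 < 2 * B * sqrt B * (sqrt X * sqrt Y * (sqrt X + sqrt Y))"
    using assms by (intro mult_pos_pos) (auto simp: add_pos_pos)
  then have "(Y - X) / (2 * B * sqrt B) \<le> (Y - X) / (sqrt X * sqrt Y * (sqrt X + sqrt Y))"
    using assms by (intro divide_left_mono[OF den]) auto
  moreover have "G / (2 * B * sqrt B) \<le> (Y - X) / (2 * B * sqrt B)"
    using assms by (intro divide_right_mono) auto
  ultimately show ?thesis
    using assms by (simp add: inv_sqrt_diff_eq)
qed

lemma inv_sqrt_diff_le:
  fixes X Y m :: real
  assumes "0 < m" "m \<le> X" "X \<le> Y"
  shows "1 / sqrt X - 1 / sqrt Y \<le> (Y - X) / (2 * m * sqrt m)"
proof -
  have sqrt_le: "sqrt m \<le> sqrt X" "sqrt m \<le> sqrt Y"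
    using assms by simp_all
  have "sqrt m * sqrt m \<le> sqrt X * sqrt Y"
    using sqrt_le assms by (intro mult_mono) auto
  moreover have "2 * sqrt m \<le> sqrt X + sqrt Y"
    using sqrt_le by linarith
  ultimately have "sqrt m * sqrt m * (2 * sqrt m) \<le> sqrt X * sqrt Y * (sqrt X + sqrt Y)"
    by (rule mult_mono) (use assms in auto)
  then have den: "2 * m * sqrt m \<le> sqrt X * sqrt Y * (sqrt X + sqrt Y)"
    using assms by (simp add: mult_ac)
  have "0 < sqrt X * sqrt Y * (sqrt X + sqrt Y) * (2 * m * sqrt m)"
    using assms by (intro mult_pos_pos) (auto simp: add_pos_pos)
  then have "(Y - X) / (sqrt X * sqrt Y * (sqrt X + sqrt Y)) \<le> (Y - X) / (2 * m * sqrt m)"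
    using assms by (intro divide_left_mono[OF den]) auto
  then show ?thesis
    using assms by (simp add: inv_sqrt_diff_eq)
qed

lemma inv_sqrt_diff_ge_neg:
  fixes X Y m E :: real
  assumes "0 < m" "m \<le> X" "m \<le> Y" "Y - X \<le> E" "0 \<le> E"
  shows "- (E / (2 * m * sqrt m)) \<le> 1 / sqrt Y - 1 / sqrt X"
proof (cases "Y \<le> X")
  case True
  then have "1 / sqrt X \<le> 1 / sqrt Y"
    using assms by (intro inv_sqrt_antimono) auto
  moreover have "0 \<le> E / (2 * m * sqrt m)"
    using assms by simp
  ultimately show ?thesis
    by linarith
next
  case False
  then have "1 / sqrt X - 1 / sqrt Y \<le> (Y - X) / (2 * m * sqrt m)"
    using assms by (intro inv_sqrt_diff_le) auto
  also have "\<dots> \<le> E / (2 * m * sqrt m)"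
    using assms by (intro divide_right_mono) auto
  finally show ?thesis
    by linarith
qed

lemma inverse_square_mean_value:
  fixes q x y :: real
  assumes x: "0 < x" and xy: "x < y"
  shows "\<exists>\<xi>\<in>{x<..<y}. (1 / x\<^sup>2 - 1 / y\<^sup>2) * (q * \<xi> powr (q + 2)) = 2 * (y powr q - x powr q)"
proof -
  have "\<exists>\<xi>. x < \<xi> \<and> \<xi> < y \<and>
      (- 1 / y\<^sup>2 - - 1 / x\<^sup>2) * (q * \<xi> powr (q - 1)) = (y powr q - x powr q) * (2 / \<xi> ^ 3)"
  proof (rule GMVT'[OF xy])
    fix z assume "x \<le> z"
    then have "0 < z"
      using x by simp
    then show "isCont (\<lambda>z. - 1 / z\<^sup>2) z" "isCont (\<lambda>z. z powr q) z"
      by (intro continuous_intros; simp)+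
  next
    fix z assume "x < z"
    then have z: "0 < z"
      using x by simp
    then show "((\<lambda>z. z powr q) has_real_derivative q * z powr (q - 1)) (at z)"
      by (rule has_real_derivative_powr)
    show "((\<lambda>z. - 1 / z\<^sup>2) has_real_derivative 2 / z ^ 3) (at z)"
      using DERIV_minus[OF DERIV_inverse_fun[OF DERIV_pow[of 2 z]]] z
      by (simp add: inverse_eq_divide power2_eq_square power3_eq_cube mult.assoc)
  qed
  then obtain \<xi> where \<xi>: "x < \<xi>" "\<xi> < y"
    and eq: "(- 1 / y\<^sup>2 - - 1 / x\<^sup>2) * (q * \<xi> powr (q - 1)) = (y powr q - x powr q) * (2 / \<xi> ^ 3)"
    by blast
  have "\<xi> powr (q + 2) = \<xi> powr (q - 1) * \<xi> powr 3"
    by (simp add: add.commute flip: powr_add)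
  also have "\<xi> powr 3 = \<xi> ^ 3"
    using x \<xi> powr_realpow[of \<xi> 3] by simp
  finally have "(1 / x\<^sup>2 - 1 / y\<^sup>2) * (q * \<xi> powr (q + 2)) = 2 * (y powr q - x powr q)"
    using eq x \<xi> by (simp add: field_simps)
  then show ?thesis
    using \<xi> by auto
qed

lemma inverse_square_diff_le_powr_diff:
  fixes q u x y :: real
  assumes q: "0 < q" and u: "0 < u" "u \<le> x" and xy: "x < y"
  shows "1 / x\<^sup>2 - 1 / y\<^sup>2 \<le> 2 / (q * u powr (q + 2)) * (y powr q - x powr q)"
proof -
  obtain \<xi> where \<xi>: "x < \<xi>" "\<xi> < y"
    and eq: "(1 / x\<^sup>2 - 1 / y\<^sup>2) * (q * \<xi> powr (q + 2)) = 2 * (y powr q - x powr q)"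
    using inverse_square_mean_value[of x y q] u xy by auto
  have "1 / x\<^sup>2 - 1 / y\<^sup>2 = 2 * (y powr q - x powr q) / (q * \<xi> powr (q + 2))"
    using eq q u \<xi> by (simp add: eq_divide_eq)
  also have "\<dots> \<le> 2 * (y powr q - x powr q) / (q * u powr (q + 2))"
    using q u \<xi> xy powr_mono2[of q x y]
    by (intro divide_left_mono mult_left_mono powr_mono2 mult_pos_pos) auto
  finally show ?thesis
    by simp
qed

lemma exists_cos_powr_less:
  fixes q a \<epsilon> :: real
  assumes q: "0 < q" and a: "0 \<le> a" "a < pi / 2" and \<epsilon>: "0 < \<epsilon>"
  shows "\<exists>t\<in>{a<..<pi / 2}. cos t powr q < \<epsilon>"
proof -
  have cos_lim: "(cos \<longlongrightarrow> 0) (at_left (pi / 2))"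
    using isCont_cos[of "pi / 2"] by (simp add: isCont_def filterlim_at_split)
  have near: "\<forall>\<^sub>F t in at_left (pi / 2). t \<in> {a<..<pi / 2}"
    using a by (intro eventually_at_left_real)
  have "((\<lambda>t. cos t powr q) \<longlongrightarrow> 0 powr q) (at_left (pi / 2))"
    using q a by (intro tendsto_powr'[OF cos_lim tendsto_const])
      (auto intro!: eventually_mono[OF near] cos_ge_zero)
  then have "\<forall>\<^sub>F t in at_left (pi / 2). cos t powr q < \<epsilon>"
    using q \<epsilon> by (intro order_tendstoD(2)) auto
  then have "\<forall>\<^sub>F t in at_left (pi / 2). t \<in> {a<..<pi / 2} \<and> cos t powr q < \<epsilon>"
    using near by eventually_elim auto
  then show ?thesis
    using eventually_happens'[OF trivial_limit_at_left_real] by blast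
qed

lemma continuous_attains_sup_between:
  fixes f :: "real \<Rightarrow> real"
  assumes f: "continuous_on {c..d} f" and t: "t \<in> {c..d}"
    and left: "\<And>x. x \<in> {c..a} \<Longrightarrow> f x < f t" and right: "f d < f t"
  shows "\<exists>x\<in>{a<..<d}. \<forall>y\<in>{c..d}. f y \<le> f x"
proof -
  obtain x where x: "x \<in> {c..d}" "\<forall>y\<in>{c..d}. f y \<le> f x"
    using continuous_attains_sup[OF compact_Icc _ f] t by auto
  then have "f t \<le> f x"
    using t by blast
  then have "x \<notin> {c..a}" "x \<noteq> d"
    using left[of x] right by auto
  then show ?thesis
    using x by auto
qed

section \<open>Comparing integrals of inverse square roots\<close>

lemma has_integral_inv_sqrt_one_minus: "((\<lambda>s. 1 / sqrt (1 - s)) has_integral 2) {0<..<1::real}"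
proof -
  have "((\<lambda>s. 1 / sqrt (1 - s)) has_integral (-2) * sqrt (1 - 1) - (-2) * sqrt (1 - 0)) {0..1::real}"
  proof (rule fundamental_theorem_of_calculus_interior)
    show "continuous_on {0..1::real} (\<lambda>s. (-2) * sqrt (1 - s))"
      by (intro continuous_intros)
    fix s :: real
    assume "s \<in> {0<..<1}"
    then show "((\<lambda>s. (-2) * sqrt (1 - s)) has_vector_derivative 1 / sqrt (1 - s)) (at s)"
      unfolding has_real_derivative_iff_has_vector_derivative[symmetric]
      by (auto intro!: derivative_eq_intros simp: divide_simps)
  qed simp
  then show ?thesis
    by (simp add: has_integral_Icc_iff_Ioo)
qed

lemma integrable_on_Ioo_const: "(\<lambda>_. c :: real) integrable_on {0<..<1::real}"
  using integrable_const_ivl integrable_on_open_interval_real by blast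

lemma integral_const_Ioo: "integral {0<..<1::real} (\<lambda>_. c) = (c::real)"
  using integral_open_interval_real[of 0 1 "\<lambda>_. c"] by simp

lemma integral_ge_of_piecewise_bounds:
  fixes f :: "real \<Rightarrow> real" and P N t :: real
  assumes f: "f integrable_on {0..1}" and t: "1 / 2 \<le> t" "t \<le> 1"
    and "\<And>s. s \<in> {0..1/2} \<Longrightarrow> P \<le> f s"
    and "\<And>s. s \<in> {1/2..t} \<Longrightarrow> 0 \<le> f s"
    and "\<And>s. s \<in> {t..1} \<Longrightarrow> - N \<le> f s"
  shows "P / 2 - (1 - t) * N \<le> integral {0..1} f"
proof -
  have int: "f integrable_on {x..y}" if "0 \<le> x" "y \<le> 1" for x y
    using integrable_on_subinterval[OF f] that by auto
  have const_le: "(y - x) * c \<le> integral {x..y} f"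
    if "0 \<le> x" "x \<le> y" "y \<le> 1" "\<And>s. s \<in> {x..y} \<Longrightarrow> c \<le> f s" for x y c
    using integral_le[OF integrable_const_ivl int[OF that(1,3)]] that by simp
  have "integral {0..1} f = integral {0..1/2} f + (integral {1/2..t} f + integral {t..1} f)"
    using t int by (simp add: Henstock_Kurzweil_Integration.integral_combine)
  then show ?thesis
    using const_le[of 0 "1/2" P] const_le[of "1/2" t 0] const_le[of t 1 "- N"] t assms(4-6)
    by (simp add: algebra_simps)
qed

(* Split [0,1] at 1/2 and at 1 - M/K, beyond which K D w s need no longer dominate E. *)
lemma integral_inv_sqrt_diff_ge:
  fixes A1 A2 w :: "real \<Rightarrow> real" and K D E M m B :: real
  assumes int1: "(\<lambda>s. 1 / sqrt (A1 s)) integrable_on {0..1}"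
    and int2: "(\<lambda>s. 1 / sqrt (A2 s)) integrable_on {0..1}"
    and diff: "\<And>s. A1 s - A2 s = K * D * w s - E"
    and w: "\<And>s. s \<in> {0..1} \<Longrightarrow> 1 - s \<le> w s"
    and lower: "\<And>s. s \<in> {0..1} \<Longrightarrow> m \<le> A1 s \<and> m \<le> A2 s"
    and upper: "\<And>s. s \<in> {0..1} \<Longrightarrow> A1 s \<le> B \<and> A2 s \<le> B"
    and m: "0 < m" and D: "0 < D" and E: "0 \<le> E" "E \<le> M * D"
    and K: "0 < K" "4 * M \<le> K"
  shows "K * D / (16 * B * sqrt B) - M / K * (E / (2 * m * sqrt m))
    \<le> integral {0..1} (\<lambda>s. 1 / sqrt (A2 s) - 1 / sqrt (A1 s))"
proof -
  define t where "t = 1 - M / K"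
  have t: "1 / 2 \<le> t" "t \<le> 1"
    using K E D zero_le_mult_iff[of M D] by (auto simp: t_def field_simps)
  have KD: "0 \<le> K * D"
    using K D by simp
  have "K * D / (8 * B * sqrt B) / 2 - (1 - t) * (E / (2 * m * sqrt m))
      \<le> integral {0..1} (\<lambda>s. 1 / sqrt (A2 s) - 1 / sqrt (A1 s))"
  proof (rule integral_ge_of_piecewise_bounds[OF integrable_diff[OF int2 int1] t])
    fix s :: real assume s: "s \<in> {0..1/2}"
    have "K * D * (1 / 2) \<le> K * D * w s"
      using w[of s] s KD by (intro mult_left_mono) auto
    moreover have "M * D \<le> K / 4 * D"
      using K D by (intro mult_right_mono) auto
    ultimately have gap: "K * D / 4 \<le> A1 s - A2 s"
      using diff[of s] E by linarith
    then have "K * D / 4 / (2 * B * sqrt B) \<le> 1 / sqrt (A2 s) - 1 / sqrt (A1 s)"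
      using s lower[of s] upper[of s] m KD by (intro inv_sqrt_diff_ge) auto
    then show "K * D / (8 * B * sqrt B) \<le> 1 / sqrt (A2 s) - 1 / sqrt (A1 s)"
      by (simp add: mult.assoc)
  next
    fix s :: real assume s: "s \<in> {1/2..t}"
    have "K * D * (M / K) \<le> K * D * w s"
      using w[of s] s t KD by (intro mult_left_mono) (auto simp: t_def)
    then have "0 \<le> A1 s - A2 s"
      using diff[of s] E K by (simp add: mult.commute)
    then show "0 \<le> 1 / sqrt (A2 s) - 1 / sqrt (A1 s)"
      using inv_sqrt_diff_ge_neg[of m "A1 s" "A2 s" 0] s t lower[of s] m by auto
  next
    fix s :: real assume s: "s \<in> {t..1}"
    have "0 \<le> K * D * w s"
      using w[of s] s t KD by simp
    then show "- (E / (2 * m * sqrt m)) \<le> 1 / sqrt (A2 s) - 1 / sqrt (A1 s)"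
      using diff[of s] s t lower[of s] m E by (intro inv_sqrt_diff_ge_neg) auto
  qed
  then show ?thesis
    by (simp add: t_def)
qed

(* B grows like K, so the last hypothesis holds for large K: the gain of order K D / B^(3/2)
   on [0, 1/2] beats the loss of order M^2 D / K near s = 1. *)
lemma integral_inv_sqrt_less:
  fixes A1 A2 w :: "real \<Rightarrow> real" and K D E M m B :: real
  assumes int1: "(\<lambda>s. 1 / sqrt (A1 s)) integrable_on {0..1}"
    and int2: "(\<lambda>s. 1 / sqrt (A2 s)) integrable_on {0..1}"
    and "\<And>s. A1 s - A2 s = K * D * w s - E"
    and "\<And>s. s \<in> {0..1} \<Longrightarrow> 1 - s \<le> w s"
    and lower: "\<And>s. s \<in> {0..1} \<Longrightarrow> m \<le> A1 s \<and> m \<le> A2 s"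
    and upper: "\<And>s. s \<in> {0..1} \<Longrightarrow> A1 s \<le> B \<and> A2 s \<le> B"
    and m: "0 < m" and D: "0 < D" and E: "0 \<le> E" "E \<le> M * D"
    and K: "4 * M \<le> K" "8 * M\<^sup>2 * (B * sqrt B) < K\<^sup>2 * (m * sqrt m)"
  shows "integral {0..1} (\<lambda>s. 1 / sqrt (A1 s)) < integral {0..1} (\<lambda>s. 1 / sqrt (A2 s))"
proof -
  have M: "0 \<le> M"
    using E D zero_le_mult_iff[of M D] by linarith
  have B: "0 < B"
    using lower[of 0] upper[of 0] m by auto
  have K_pos: "0 < K"
    using K M B m by (cases "K = 0") auto
  have "M / K * (E / (2 * m * sqrt m)) \<le> M / K * (M * D / (2 * m * sqrt m))"
    using E M K_pos m by (auto intro!: mult_left_mono divide_right_mono)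
  also have "\<dots> < K * D / (16 * B * sqrt B)"
    using mult_strict_right_mono[OF K(2), of D] D K_pos B m
    by (simp add: field_simps power2_eq_square)
  also have "K * D / (16 * B * sqrt B) - M / K * (E / (2 * m * sqrt m))
      \<le> integral {0..1} (\<lambda>s. 1 / sqrt (A2 s) - 1 / sqrt (A1 s))"
    by (rule integral_inv_sqrt_diff_ge[OF assms(1-10) K_pos K(1)])
  finally show ?thesis
    using integral_diff[OF int2 int1] by simp
qed

section \<open>The time map\<close>

definition radicand :: "real \<Rightarrow> real \<Rightarrow> real \<Rightarrow> real \<Rightarrow> real" where
  "radicand p K \<theta> s = 1 / (cos \<theta>)\<^sup>2 - s\<^sup>2 + K * cos \<theta> powr (p - 1) * (1 - s powr (p + 1))"

definition time_map :: "real \<Rightarrow> real \<Rightarrow> real \<Rightarrow> real" where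
  "time_map p K \<theta> =
    (if \<theta> = pi / 2 then 0 else 2 * integral {0..1} (\<lambda>s. 1 / sqrt (radicand p K \<theta> s)))"

lemma phi_eq_time_map: "phi p lam R = time_map p (2 * R powr (p - 1) / (lam * (p + 1)))"
  by (simp add: fun_eq_iff phi_def time_map_def radicand_def)

lemma time_map_eq_integral:
  assumes "0 < cos \<theta>"
  shows "time_map p K \<theta> = 2 * integral {0..1} (\<lambda>s. 1 / sqrt (radicand p K \<theta> s))"
proof -
  have "\<theta> \<noteq> pi / 2"
    using assms by (metis cos_pi_half less_irrefl)
  then show ?thesis
    by (simp add: time_map_def)
qed

lemma time_map_eq_integral_Ioo:
  "0 < cos \<theta> \<Longrightarrow> time_map p K \<theta> = 2 * integral {0<..<1} (\<lambda>s. 1 / sqrt (radicand p K \<theta> s))"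
  by (simp add: time_map_eq_integral flip: integral_open_interval_real)

lemma time_map_pi_half [simp]: "time_map p K (pi / 2) = 0"
  by (simp add: time_map_def)

context
  fixes p :: real
  assumes p: "1 < p"
begin

lemma radicand_bounds:
  assumes K: "0 \<le> K" and c: "0 < cos \<theta>" and s: "0 \<le> s" "s \<le> 1"
  shows radicand_ge_sec: "1 / (cos \<theta>)\<^sup>2 - 1 \<le> radicand p K \<theta> s"
    and radicand_ge_one_minus: "1 - s \<le> radicand p K \<theta> s"
    and radicand_ge_linear: "K * cos \<theta> powr (p - 1) * (1 - s) \<le> radicand p K \<theta> s"
    and radicand_le: "radicand p K \<theta> s \<le> 1 / (cos \<theta>)\<^sup>2 + K * cos \<theta> powr (p - 1)"
proof -
  define T where "T = K * cos \<theta> powr (p - 1)"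
  have T: "0 \<le> T"
    using K by (simp add: T_def)
  have "s powr (p + 1) \<le> s"
    using s p powr_mono'[of 1 "p + 1" s] by simp
  then have bounds: "T * (1 - s) \<le> T * (1 - s powr (p + 1))" "T * (1 - s powr (p + 1)) \<le> T"
    "0 \<le> T * (1 - s)" "0 \<le> s\<^sup>2" "s\<^sup>2 \<le> s" "1 \<le> 1 / (cos \<theta>)\<^sup>2"
    using T s c abs_square_le_1[of "cos \<theta>"]
    by (auto intro: mult_left_mono mult_left_le simp: power2_eq_square mult_left_le_one_le)
  show "1 / (cos \<theta>)\<^sup>2 - 1 \<le> radicand p K \<theta> s"
    unfolding radicand_def T_def[symmetric] using bounds s by linarith
  show "1 - s \<le> radicand p K \<theta> s"
    unfolding radicand_def T_def[symmetric] using bounds s by linarith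
  show "K * cos \<theta> powr (p - 1) * (1 - s) \<le> radicand p K \<theta> s"
    unfolding radicand_def T_def[symmetric] using bounds s by linarith
  show "radicand p K \<theta> s \<le> 1 / (cos \<theta>)\<^sup>2 + K * cos \<theta> powr (p - 1)"
    unfolding radicand_def T_def[symmetric] using bounds s by linarith
qed

lemma radicand_bounds_uniform:
  assumes K: "0 \<le> K" and cos: "0 < u" "u \<le> cos \<theta>" "cos \<theta> \<le> v" and s: "0 \<le> s" "s \<le> 1"
  shows "1 / v\<^sup>2 - 1 \<le> radicand p K \<theta> s" "radicand p K \<theta> s \<le> 1 / u\<^sup>2 + K"
proof -
  have c: "0 < cos \<theta>"
    using cos by simp
  have "1 / v\<^sup>2 \<le> 1 / (cos \<theta>)\<^sup>2"
    using cos by (intro divide_left_mono power_mono) auto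
  then show "1 / v\<^sup>2 - 1 \<le> radicand p K \<theta> s"
    using radicand_ge_sec[OF K c s] by linarith
  have "1 / (cos \<theta>)\<^sup>2 \<le> 1 / u\<^sup>2"
    using cos by (intro divide_left_mono power_mono) auto
  moreover have "K * cos \<theta> powr (p - 1) \<le> K * 1"
    using c K p by (intro mult_left_mono) (auto simp: powr_le1)
  ultimately show "radicand p K \<theta> s \<le> 1 / u\<^sup>2 + K"
    using radicand_le[OF K c s] by linarith
qed

lemma norm_inv_sqrt_radicand_le:
  assumes "0 \<le> K" "0 < cos \<theta>" "s \<in> {0<..<1}"
  shows "norm (1 / sqrt (radicand p K \<theta> s)) \<le> 1 / sqrt (1 - s)"
  using assms radicand_ge_one_minus[OF assms(1,2), of s] inv_sqrt_antimono[of "1 - s"] by auto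

(* The open interval avoids s = 1, where the radicand vanishes for theta = 0. *)
lemma integrable_inv_sqrt_radicand:
  assumes K: "0 \<le> K" and c: "0 < cos \<theta>"
  shows "(\<lambda>s. 1 / sqrt (radicand p K \<theta> s)) integrable_on {0<..<1}"
proof (rule measurable_bounded_by_integrable_imp_integrable)
  have pos: "0 < radicand p K \<theta> s" if "s \<in> {0<..<1}" for s
    using radicand_ge_one_minus[OF K c, of s] that by auto
  have "continuous_on {0<..<1} (radicand p K \<theta>)"
    unfolding radicand_def by (intro continuous_intros) auto
  then have "continuous_on {0<..<1} (\<lambda>s. 1 / sqrt (radicand p K \<theta> s))"
    using pos by (intro continuous_on_divide continuous_on_const continuous_on_real_sqrt) force+
  then show "(\<lambda>s. 1 / sqrt (radicand p K \<theta> s)) \<in> borel_measurable (lebesgue_on {0<..<1})"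
    by (rule continuous_imp_measurable_on_sets_lebesgue) simp
  show "norm (1 / sqrt (radicand p K \<theta> s)) \<le> 1 / sqrt (1 - s)" if "s \<in> {0<..<1}" for s
    using norm_inv_sqrt_radicand_le[OF K c that] .
qed (use has_integral_inv_sqrt_one_minus in auto)

(* Symmetric about 0 so that continuity on this open set gives continuity at 0 as well. *)
lemma continuous_on_time_map_open:
  assumes K: "0 \<le> K"
  shows "continuous_on {-(pi/2)<..<pi/2} (time_map p K)"
proof -
  have cos_pos: "0 < cos \<theta>" if "\<theta> \<in> {-(pi/2)<..<pi/2}" for \<theta>
    using that by (auto intro: cos_gt_zero_pi)
  have "continuous_on {-(pi/2)<..<pi/2} (\<lambda>\<theta>. integral {0<..<1} (\<lambda>s. 1 / sqrt (radicand p K \<theta> s)))"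
    unfolding continuous_on_sequentially
  proof (intro allI ballI impI)
    fix x :: "nat \<Rightarrow> real" and \<theta>
    assume \<theta>: "\<theta> \<in> {-(pi/2)<..<pi/2}" and x: "(\<forall>n. x n \<in> {-(pi/2)<..<pi/2}) \<and> x \<longlonglongrightarrow> \<theta>"
    have "(\<lambda>n. integral {0<..<1} (\<lambda>s. 1 / sqrt (radicand p K (x n) s)))
        \<longlonglongrightarrow> integral {0<..<1} (\<lambda>s. 1 / sqrt (radicand p K \<theta> s))"
    proof (rule dominated_convergence(2))
      show "(\<lambda>s. 1 / sqrt (radicand p K (x n) s)) integrable_on {0<..<1}" for n
        using x cos_pos K by (intro integrable_inv_sqrt_radicand) auto
      show "(\<lambda>s. 1 / sqrt (1 - s)) integrable_on {0<..<1::real}"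
        using has_integral_inv_sqrt_one_minus by blast
      show "norm (1 / sqrt (radicand p K (x n) s)) \<le> 1 / sqrt (1 - s)" if "s \<in> {0<..<1}" for n s
        using norm_inv_sqrt_radicand_le[OF K cos_pos that] x by simp
      fix s :: real
      assume s: "s \<in> {0<..<1}"
      have "0 < radicand p K \<theta> s"
        using radicand_ge_one_minus[OF K cos_pos[OF \<theta>], of s] s by auto
      then have "isCont (\<lambda>\<theta>. 1 / sqrt (radicand p K \<theta> s)) \<theta>"
        using cos_pos[OF \<theta>] unfolding radicand_def by (intro continuous_intros) auto
      then show "(\<lambda>n. 1 / sqrt (radicand p K (x n) s)) \<longlonglongrightarrow> 1 / sqrt (radicand p K \<theta> s)"
        by (rule isCont_tendsto_compose[OF _ conjunct2[OF x]])
    qed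
    then show "((\<lambda>\<theta>. integral {0<..<1} (\<lambda>s. 1 / sqrt (radicand p K \<theta> s))) \<circ> x)
        \<longlonglongrightarrow> integral {0<..<1} (\<lambda>s. 1 / sqrt (radicand p K \<theta> s))"
      by (simp add: o_def)
  qed
  then have "continuous_on {-(pi/2)<..<pi/2}
      (\<lambda>\<theta>. 2 * integral {0<..<1} (\<lambda>s. 1 / sqrt (radicand p K \<theta> s)))"
    by (rule continuous_on_mult_left)
  then show ?thesis
    by (rule continuous_on_eq) (simp add: cos_pos time_map_eq_integral_Ioo)
qed

lemma time_map_ge:
  assumes K: "0 \<le> K" and c: "0 < cos \<theta>"
  shows "2 / sqrt (1 / (cos \<theta>)\<^sup>2 + K * cos \<theta> powr (p - 1)) \<le> time_map p K \<theta>"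
proof -
  let ?c = "1 / sqrt (1 / (cos \<theta>)\<^sup>2 + K * cos \<theta> powr (p - 1))"
  have "integral {0<..<1::real} (\<lambda>_. ?c) \<le> integral {0<..<1} (\<lambda>s. 1 / sqrt (radicand p K \<theta> s))"
  proof (rule integral_le[OF integrable_on_Ioo_const integrable_inv_sqrt_radicand[OF K c]])
    fix s :: real assume "s \<in> {0<..<1}"
    then show "?c \<le> 1 / sqrt (radicand p K \<theta> s)"
      using radicand_ge_one_minus[OF K c, of s] radicand_le[OF K c, of s]
      by (intro inv_sqrt_antimono) auto
  qed
  then show ?thesis
    using c by (simp add: time_map_eq_integral_Ioo integral_const_Ioo)
qed

lemma time_map_pos:
  assumes K: "0 \<le> K" and c: "0 < cos \<theta>"
  shows "0 < time_map p K \<theta>"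
proof -
  have "0 < 1 / (cos \<theta>)\<^sup>2 + K * cos \<theta> powr (p - 1)"
    using K c by (simp add: add_pos_nonneg)
  then show ?thesis
    using time_map_ge[OF K c] by (meson divide_pos_pos order_less_le_trans real_sqrt_gt_zero
        zero_less_numeral)
qed

lemma time_map_le_cos:
  assumes K: "0 \<le> K" and c: "0 < cos \<theta>" "cos \<theta> \<le> 1 / 2"
  shows "time_map p K \<theta> \<le> 4 * cos \<theta>"
proof -
  have "integral {0<..<1} (\<lambda>s. 1 / sqrt (radicand p K \<theta> s)) \<le> integral {0<..<1::real} (\<lambda>_. 2 * cos \<theta>)"
  proof (rule integral_le[OF integrable_inv_sqrt_radicand[OF K c(1)] integrable_on_Ioo_const])
    fix s :: real assume s: "s \<in> {0<..<1}"
    have "(cos \<theta>)\<^sup>2 \<le> (1 / 2)\<^sup>2"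
      using c by (intro power_mono) auto
    then have "1 / (4 * (cos \<theta>)\<^sup>2) \<le> 1 / (cos \<theta>)\<^sup>2 - 1"
      using c by (simp add: field_simps)
    also have "\<dots> \<le> radicand p K \<theta> s"
      using radicand_ge_sec[OF K c(1), of s] s by simp
    finally have "1 / sqrt (radicand p K \<theta> s) \<le> 1 / sqrt (1 / (4 * (cos \<theta>)\<^sup>2))"
      using c by (intro inv_sqrt_antimono) auto
    then show "1 / sqrt (radicand p K \<theta> s) \<le> 2 * cos \<theta>"
      using c by (simp add: real_sqrt_divide real_sqrt_mult)
  qed
  then show ?thesis
    using c by (simp add: time_map_eq_integral_Ioo integral_const_Ioo)
qed

lemma time_map_le_of_cos_ge:
  assumes K: "0 < K" and c: "0 < cos a" "cos a \<le> cos \<theta>"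
  shows "time_map p K \<theta> \<le> 4 / sqrt (K * cos a powr (p - 1))"
proof -
  define k where "k = 1 / sqrt (K * cos a powr (p - 1))"
  have c\<theta>: "0 < cos \<theta>"
    using c by simp
  have k: "((\<lambda>s. k * (1 / sqrt (1 - s))) has_integral k * 2) {0<..<1}"
    by (rule has_integral_mult_right[OF has_integral_inv_sqrt_one_minus])
  have "integral {0<..<1} (\<lambda>s. 1 / sqrt (radicand p K \<theta> s))
      \<le> integral {0<..<1} (\<lambda>s. k * (1 / sqrt (1 - s)))"
  proof (rule integral_le[OF integrable_inv_sqrt_radicand[OF _ c\<theta>]])
    show "(\<lambda>s. k * (1 / sqrt (1 - s))) integrable_on {0<..<1}"
      using k by blast
    fix s :: real assume s: "s \<in> {0<..<1}"
    have "cos a powr (p - 1) \<le> cos \<theta> powr (p - 1)"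
      using c p by (intro powr_mono2) auto
    then have "K * cos a powr (p - 1) * (1 - s) \<le> K * cos \<theta> powr (p - 1) * (1 - s)"
      using K s by (intro mult_right_mono mult_left_mono) auto
    also have "\<dots> \<le> radicand p K \<theta> s"
      using radicand_ge_linear[OF _ c\<theta>, of K s] K s by simp
    finally have "1 / sqrt (radicand p K \<theta> s) \<le> 1 / sqrt (K * cos a powr (p - 1) * (1 - s))"
      using K c s by (intro inv_sqrt_antimono) auto
    then show "1 / sqrt (radicand p K \<theta> s) \<le> k * (1 / sqrt (1 - s))"
      by (simp add: k_def real_sqrt_mult)
  qed (use K in simp)
  also have "\<dots> = k * 2"
    using k by (rule integral_unique)
  finally show ?thesis
    using c\<theta> by (simp add: time_map_eq_integral_Ioo k_def)
qed

lemma continuous_on_time_map: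
  assumes K: "0 \<le> K"
  shows "continuous_on {0..pi/2} (time_map p K)"
proof (rule continuous_on_IccI)
  have cont: "isCont (time_map p K) \<theta>" if "\<theta> \<in> {-(pi/2)<..<pi/2}" for \<theta>
    using continuous_on_time_map_open[OF K] that by (simp add: continuous_on_eq_continuous_at)
  show "(time_map p K \<longlongrightarrow> time_map p K 0) (at_right 0)"
    using cont[of 0] by (simp add: isCont_def filterlim_at_split)
  show "time_map p K \<midarrow>\<theta>\<rightarrow> time_map p K \<theta>" if "0 < \<theta>" "\<theta> < pi / 2" for \<theta>
    using cont[of \<theta>] that by (simp add: isCont_def)
  have cos_lim: "(cos \<longlongrightarrow> 0) (at_left (pi / 2))"
    using isCont_cos[of "pi / 2"] by (simp add: isCont_def filterlim_at_split)
  have "\<forall>\<^sub>F \<theta> in at_left (pi / 2). \<theta> \<in> {pi / 3<..<pi / 2}"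
    by (rule eventually_at_left_real) simp
  then have near: "\<forall>\<^sub>F \<theta> in at_left (pi / 2). 0 < cos \<theta> \<and> cos \<theta> \<le> 1 / 2"
  proof eventually_elim
    case (elim \<theta>)
    then show ?case
      using cos_monotone_0_pi[of "pi / 3" \<theta>] by (auto simp: cos_60 intro: cos_gt_zero_pi)
  qed
  have "\<forall>\<^sub>F \<theta> in at_left (pi / 2). 0 \<le> time_map p K \<theta>"
    using near by (rule eventually_mono) (auto intro: less_imp_le time_map_pos[OF K])
  moreover have "\<forall>\<^sub>F \<theta> in at_left (pi / 2). time_map p K \<theta> \<le> 4 * cos \<theta>"
    using near by (rule eventually_mono) (auto intro: time_map_le_cos[OF K])
  moreover have "((\<lambda>\<theta>. 4 * cos \<theta>) \<longlongrightarrow> 0) (at_left (pi / 2))"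
    using tendsto_mult_left[OF cos_lim, of 4] by simp
  ultimately show "(time_map p K \<longlongrightarrow> time_map p K (pi / 2)) (at_left (pi / 2))"
    using tendsto_sandwich[OF _ _ tendsto_const] by simp
qed simp

(* M is the constant of inverse_square_diff_le_powr_diff for q = p - 1. *)
lemma time_map_less:
  fixes u v :: real
  defines "M \<equiv> 2 / ((p - 1) * u powr (p + 1))" and "m \<equiv> 1 / v\<^sup>2 - 1"
  assumes K: "0 \<le> K"
    and cos: "0 < u" "u \<le> cos \<theta>\<^sub>2" "cos \<theta>\<^sub>2 < cos \<theta>\<^sub>1" "cos \<theta>\<^sub>1 \<le> v" "v < 1"
    and large: "4 * M \<le> K" "8 * M\<^sup>2 * ((1 / u\<^sup>2 + K) * sqrt (1 / u\<^sup>2 + K)) < K\<^sup>2 * (m * sqrt m)"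
  shows "time_map p K \<theta>\<^sub>1 < time_map p K \<theta>\<^sub>2"
proof -
  have c: "0 < cos \<theta>\<^sub>1" "0 < cos \<theta>\<^sub>2"
    using cos by auto
  have int: "(\<lambda>s. 1 / sqrt (radicand p K \<theta> s)) integrable_on {0..1}" if "0 < cos \<theta>" for \<theta>
    using integrable_inv_sqrt_radicand[OF K that] by (simp add: integrable_on_Icc_iff_Ioo)
  have "integral {0..1} (\<lambda>s. 1 / sqrt (radicand p K \<theta>\<^sub>1 s))
      < integral {0..1} (\<lambda>s. 1 / sqrt (radicand p K \<theta>\<^sub>2 s))"
  proof (rule integral_inv_sqrt_less[OF int[OF c(1)] int[OF c(2)] _ _ _ _ _ _ _ _ large,
        where w = "\<lambda>s. 1 - s powr (p + 1)"])
    show "radicand p K \<theta>\<^sub>1 s - radicand p K \<theta>\<^sub>2 s = K * (cos \<theta>\<^sub>1 powr (p - 1) - cos \<theta>\<^sub>2 powr (p - 1))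
        * (1 - s powr (p + 1)) - (1 / (cos \<theta>\<^sub>2)\<^sup>2 - 1 / (cos \<theta>\<^sub>1)\<^sup>2)" for s
      by (simp add: radicand_def algebra_simps)
    show "1 - s \<le> 1 - s powr (p + 1)" if "s \<in> {0..1}" for s
      using that p powr_mono'[of 1 "p + 1" s] by simp
    fix s :: real assume "s \<in> {0..1}"
    then have s: "0 \<le> s" "s \<le> 1"
      by auto
    have "cos \<theta>\<^sub>2 \<le> v" "u \<le> cos \<theta>\<^sub>1"
      using cos by linarith+
    then show "m \<le> radicand p K \<theta>\<^sub>1 s \<and> m \<le> radicand p K \<theta>\<^sub>2 s"
      and "radicand p K \<theta>\<^sub>1 s \<le> 1 / u\<^sup>2 + K \<and> radicand p K \<theta>\<^sub>2 s \<le> 1 / u\<^sup>2 + K"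
      using radicand_bounds_uniform[OF K cos(1) _ cos(4) s] radicand_bounds_uniform[OF K cos(1,2) _ s]
      unfolding m_def by auto
  next
    have "v\<^sup>2 < 1"
      using cos by (simp add: power_less_one_iff)
    then show "0 < m"
      using cos by (simp add: m_def field_simps)
    show "0 < cos \<theta>\<^sub>1 powr (p - 1) - cos \<theta>\<^sub>2 powr (p - 1)"
      using cos p by (simp add: powr_less_mono2)
    show "0 \<le> 1 / (cos \<theta>\<^sub>2)\<^sup>2 - 1 / (cos \<theta>\<^sub>1)\<^sup>2"
      using cos by (simp add: frac_le power_mono)
    show "1 / (cos \<theta>\<^sub>2)\<^sup>2 - 1 / (cos \<theta>\<^sub>1)\<^sup>2 \<le> M * (cos \<theta>\<^sub>1 powr (p - 1) - cos \<theta>\<^sub>2 powr (p - 1))"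
      using inverse_square_diff_le_powr_diff[of "p - 1" u "cos \<theta>\<^sub>2" "cos \<theta>\<^sub>1"] cos p
      by (simp add: M_def add.commute)
  qed
  then show ?thesis
    using c by (simp add: time_map_eq_integral)
qed

lemma eventually_time_map_strict_mono_on:
  assumes a: "0 < a" "a \<le> c" and c: "c < pi / 2"
  shows "\<forall>\<^sub>F K in at_top. strict_mono_on {a..c} (time_map p K)"
proof -
  define u v where "u = cos c" and "v = cos a"
  define M m where "M = 2 / ((p - 1) * u powr (p + 1))" and "m = 1 / v\<^sup>2 - 1"
  have "0 < v" "v < 1"
    using a c cos_monotone_0_pi[of 0 a] by (auto simp: v_def intro!: cos_gt_zero_pi)
  then have "v\<^sup>2 < 1"
    by (simp add: power_less_one_iff)
  then have m: "0 < m"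
    using \<open>0 < v\<close> by (simp add: m_def field_simps)
  have "\<forall>\<^sub>F K in at_top. 0 \<le> K \<and> 4 * M \<le> K \<and>
      8 * M\<^sup>2 / (m * sqrt m) * ((1 / u\<^sup>2 + K) * sqrt (1 / u\<^sup>2 + K)) < K\<^sup>2"
    using m by (intro eventually_conj eventually_ge_at_top eventually_cube_sqrt_less_square) auto
  then show ?thesis
  proof eventually_elim
    case (elim K)
    then have large: "8 * M\<^sup>2 * ((1 / u\<^sup>2 + K) * sqrt (1 / u\<^sup>2 + K)) < K\<^sup>2 * (m * sqrt m)"
      using m by (simp add: field_simps)
    show ?case
    proof (rule strict_mono_onI)
      fix \<theta>\<^sub>1 \<theta>\<^sub>2 assume \<theta>: "\<theta>\<^sub>1 \<in> {a..c}" "\<theta>\<^sub>2 \<in> {a..c}" "\<theta>\<^sub>1 < \<theta>\<^sub>2"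
      have "0 < \<theta>\<^sub>1" "\<theta>\<^sub>2 < pi / 2"
        using a c \<theta> by auto
      then have "0 < u" "u \<le> cos \<theta>\<^sub>2" "cos \<theta>\<^sub>2 < cos \<theta>\<^sub>1" "cos \<theta>\<^sub>1 \<le> v"
        using a c \<theta> cos_monotone_0_pi[of \<theta>\<^sub>1 \<theta>\<^sub>2] cos_gt_zero_pi[of c]
        by (simp_all add: u_def v_def cos_mono_le_eq)
      then show "time_map p K \<theta>\<^sub>1 < time_map p K \<theta>\<^sub>2"
        using time_map_less[of K u \<theta>\<^sub>2 \<theta>\<^sub>1 v] elim large \<open>v < 1\<close> by (simp add: M_def m_def)
    qed
  qed
qed

lemma time_map_less_of_cos_small:
  assumes K: "0 < K" and c: "0 < cos t" "0 < cos a" "cos a \<le> cos \<theta>"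
    and small: "8 * cos t powr (p - 1) \<le> cos a powr (p - 1)"
    and large: "8 < K * (cos t)\<^sup>2 * cos a powr (p - 1)"
  shows "time_map p K \<theta> < time_map p K t"
proof -
  define A B where "A = K * cos a powr (p - 1)" and "B = 1 / (cos t)\<^sup>2 + K * cos t powr (p - 1)"
  have "4 * K * cos t powr (p - 1) \<le> A / 2"
    using mult_left_mono[OF small, of K] K by (simp add: A_def)
  moreover have "4 / (cos t)\<^sup>2 < A / 2"
    using large c by (simp add: A_def field_simps)
  ultimately have "sqrt (4 * B) < sqrt A"
    by (simp add: B_def algebra_simps)
  then have AB: "2 * sqrt B < sqrt A"
    by (simp add: real_sqrt_mult)
  have "0 < B"
    using K c by (simp add: B_def add_pos_nonneg)
  then have B: "0 < sqrt B"
    by simp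
  then have "0 < sqrt A"
    using AB by linarith
  have "time_map p K \<theta> \<le> 4 / sqrt A"
    unfolding A_def by (rule time_map_le_of_cos_ge[OF K c(2,3)])
  also have "\<dots> < 4 / (2 * sqrt B)"
    using AB B \<open>0 < sqrt A\<close> by (intro divide_strict_left_mono mult_pos_pos) auto
  also have "\<dots> \<le> time_map p K t"
    using time_map_ge[OF less_imp_le[OF K] c(1)] by (simp add: B_def)
  finally show ?thesis .
qed

lemma eventually_time_map_attains_max:
  assumes b: "b < pi / 2"
  shows "\<forall>\<^sub>F K in at_top. \<exists>\<theta>s\<in>{b<..<pi / 2}. \<forall>\<theta>\<in>{0..pi / 2}. time_map p K \<theta> \<le> time_map p K \<theta>s"
proof -
  define a where "a = (max 0 b + pi / 2) / 2"
  have a: "0 < a" "b < a" "a < pi / 2"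
    using b pi_gt_zero by (auto simp: a_def max_def)
  have ca: "0 < cos a"
    using a by (intro cos_gt_zero_pi) auto
  obtain t where t: "a < t" "t < pi / 2" "cos t powr (p - 1) < cos a powr (p - 1) / 8"
    using exists_cos_powr_less[of "p - 1" a "cos a powr (p - 1) / 8"] p a ca by auto
  have ct: "0 < cos t"
    using a t by (intro cos_gt_zero_pi) auto
  have "\<forall>\<^sub>F K in at_top. 8 / ((cos t)\<^sup>2 * cos a powr (p - 1)) < K \<and> 0 < K"
    by (intro eventually_conj eventually_gt_at_top)
  then show ?thesis
  proof eventually_elim
    case (elim K)
    then have K: "0 < K" "8 < K * (cos t)\<^sup>2 * cos a powr (p - 1)"
      using ct ca by (auto simp: field_simps)
    have "\<exists>\<theta>s\<in>{a<..<pi / 2}. \<forall>\<theta>\<in>{0..pi / 2}. time_map p K \<theta> \<le> time_map p K \<theta>s"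
    proof (rule continuous_attains_sup_between[OF continuous_on_time_map])
      show "time_map p K \<theta> < time_map p K t" if "\<theta> \<in> {0..a}" for \<theta>
      proof (rule time_map_less_of_cos_small[OF K(1) ct ca _ _ K(2)])
        show "cos a \<le> cos \<theta>"
          using that a by (simp add: cos_mono_le_eq)
      qed (use t in simp)
      show "time_map p K (pi / 2) < time_map p K t"
        using time_map_pos[OF _ ct, of K] K by simp
    qed (use K a t in auto)
    then show ?case
      using a(2) by (meson greaterThanLessThan_iff order.strict_trans)
  qed
qed

lemma time_map_attains_pos_min:
  assumes K: "0 \<le> K" and a: "0 \<le> a" "a < pi / 2"
  shows "\<exists>\<theta>m\<in>{0..a}. (\<forall>\<theta>\<in>{0..a}. time_map p K \<theta>m \<le> time_map p K \<theta>) \<and> 0 < time_map p K \<theta>m"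
proof -
  have "continuous_on {0..a} (time_map p K)"
    by (rule continuous_on_subset[OF continuous_on_time_map[OF K]]) (use a in auto)
  then obtain \<theta>m where \<theta>m: "\<theta>m \<in> {0..a}" "\<forall>\<theta>\<in>{0..a}. time_map p K \<theta>m \<le> time_map p K \<theta>"
    using continuous_attains_inf[of "{0..a}" "time_map p K"] a by auto
  moreover have "0 < time_map p K \<theta>m"
    using \<theta>m a by (intro time_map_pos[OF K] cos_gt_zero_pi) auto
  ultimately show ?thesis
    by blast
qed

lemma eventually_time_map_shape:
  assumes "0 < a" "a < b" "b < pi / 2"
  shows "\<forall>\<^sub>F K in at_top.
           strict_mono_on {a..b} (\<lambda>\<theta>. time_map p K \<theta>)
         \<and> (\<exists>\<theta>s\<in>{b<..<pi / 2}. \<forall>\<theta>\<in>{0..pi / 2}. time_map p K \<theta> \<le> time_map p K \<theta>s)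
         \<and> (\<exists>\<theta>m\<in>{0..a}. (\<forall>\<theta>\<in>{0..a}. time_map p K \<theta>m \<le> time_map p K \<theta>)
                          \<and> time_map p K \<theta>m > 0 \<and> 0 = time_map p K (pi / 2))"
  using eventually_ge_at_top[of 0]
    eventually_time_map_strict_mono_on[OF assms(1) less_imp_le[OF assms(2)] assms(3)]
    eventually_time_map_attains_max[OF assms(3)]
proof eventually_elim
  case (elim K)
  then show ?case
    using time_map_attains_pos_min[of K a] assms by auto
qed

end

theorem lemma5p2:
  fixes p lam a b :: real
  assumes "p > 1" and "lam > 0" and "0 < a" and "a < b" and "b < pi / 2"
  shows "\<exists>Rs>0. \<forall>R>Rs.
           strict_mono_on {a..b} (\<lambda>\<theta>. phi p lam R \<theta>)
         \<and> (\<exists>\<theta>s\<in>{b<..<pi / 2}. \<forall>\<theta>\<in>{0..pi / 2}. phi p lam R \<theta> \<le> phi p lam R \<theta>s)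
         \<and> (\<exists>\<theta>m\<in>{0..a}. (\<forall>\<theta>\<in>{0..a}. phi p lam R \<theta>m \<le> phi p lam R \<theta>)
                          \<and> phi p lam R \<theta>m > 0 \<and> 0 = phi p lam R (pi / 2))"
proof -
  define K where "K R = 2 * R powr (p - 1) / (lam * (p + 1))" for R
  have "filterlim (\<lambda>R. R powr (p - 1) * (2 / (lam * (p + 1)))) at_top at_top"
    using assms by (intro filterlim_at_top_mult_tendsto_pos[OF tendsto_const] filterlim_powr_at_top) auto
  then have "filterlim K at_top at_top"
    by (simp add: K_def[abs_def] mult.commute)
  from eventually_compose_filterlim[OF eventually_time_map_shape[OF assms(1,3-5)] this]
  show ?thesis
    unfolding phi_eq_time_map K_def[symmetric] by (rule eventually_at_top_imp_pos_threshold)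
qed

end
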